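(* Let $\mathcal{H}$ be a finite family of rooted digraphs. Let $D$ be a digraph, $k$ an integer, $W$ an $\mathcal{H}$-deletion set of $D$ with $|W|\le k+1$, and $\mathcal{S}=(S_1,\dots,S_q)$ an ordered partition of $W$. Let $Q$ be a set with $S_1\subseteq Q\subseteq V(D)\setminus(W\setminus S_1)$ such that $D[Q]$ contains no subgraph isomorphic to a graph of $\mathcal{H}$ and $N^+(Q)$ is a minimum $S_1$-$(W\setminus S_1)$ separator. Let $X$ be a solution of $(D,\mathcal{S},W,k)$ such that $R_D(S_1,X)\cap N^+(Q)=\emptyset$. Then there is a solution $X'$ for $(D,\mathcal{S},W,k)$ that contains $N^+(Q)$.
   Context: Subgraphs are not necessarily induced; strong components are maximal sets of mutually reachable vertices. A digraph is rooted if some vertex reaches all its vertices. $X$ is an $\mathcal{H}$-deletion set of $D$ if no strong component of $D-X$ contains a subgraph isomorphic to a graph in $\mathcal{H}$. A solution for $(D,\mathcal{S},W,k)$ is a set $X\subseteq V(D)$ with $|X|\le k$, $X\cap W=\emptyset$, $X$ an $\mathcal{H}$-deletion set, and $X$ intersecting every directed $S_i$-$S_j$ path in $D$ for all $i<j$. $N^+(Q)$ is the set of vertices outside $Q$ with an in-neighbour in $Q$. For disjoint $A,B$, an $A$-$B$ separator is a set $C$ disjoint from $A\cup B$ such that $D-C$ has no directed path from $A$ to $B$; it is minimum if of smallest size. $R_D(A,Y)$ is the set of vertices reachable from $A$ in $D-Y$. *)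

theory Defs
  imports Main
begin

definition digraph :: "'a set \<Rightarrow> ('a \<times> 'a) set \<Rightarrow> bool" where
  "digraph V E \<longleftrightarrow> finite V \<and> E \<subseteq> V \<times> V"

text \<open>Induced subdigraph D[U] and vertex deletion D - X.\<close>
definition induced_arcs :: "('a \<times> 'a) set \<Rightarrow> 'a set \<Rightarrow> ('a \<times> 'a) set" where
  "induced_arcs E U = E \<inter> (U \<times> U)"

definition reaches :: "'a set \<Rightarrow> ('a \<times> 'a) set \<Rightarrow> 'a \<Rightarrow> 'a \<Rightarrow> bool" where
  "reaches V E u v \<longleftrightarrow> u \<in> V \<and> v \<in> V \<and> (u, v) \<in> (induced_arcs E V)\<^sup>*"

definition rooted :: "'b set \<Rightarrow> ('b \<times> 'b) set \<Rightarrow> bool" where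
  "rooted V E \<longleftrightarrow> (\<exists>r\<in>V. \<forall>v\<in>V. reaches V E r v)"

definition contains_copy :: "'a set \<Rightarrow> ('a \<times> 'a) set \<Rightarrow> 'b set \<Rightarrow> ('b \<times> 'b) set \<Rightarrow> bool" where
  "contains_copy V E VH EH \<longleftrightarrow>
     (\<exists>f. inj_on f VH \<and> f ` VH \<subseteq> V \<and> (\<forall>(u, v)\<in>EH. (f u, f v) \<in> E))"

definition strong_component :: "'a set \<Rightarrow> ('a \<times> 'a) set \<Rightarrow> 'a set \<Rightarrow> bool" where
  "strong_component V E C \<longleftrightarrow>
     C \<noteq> {} \<and> C \<subseteq> V \<and> (\<forall>u\<in>C. \<forall>v\<in>C. reaches V E u v) \<and>
     (\<forall>w\<in>V. (\<exists>u\<in>C. reaches V E u w \<and> reaches V E w u) \<longrightarrow> w \<in> C)"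

definition H_deletion_set ::
  "('b set \<times> ('b \<times> 'b) set) set \<Rightarrow> 'a set \<Rightarrow> ('a \<times> 'a) set \<Rightarrow> 'a set \<Rightarrow> bool" where
  "H_deletion_set \<H> V E X \<longleftrightarrow>
     (\<forall>C. strong_component (V - X) (induced_arcs E (V - X)) C \<longrightarrow>
        (\<forall>(VH, EH)\<in>\<H>. \<not> contains_copy C (induced_arcs E C) VH EH))"

definition dpath :: "'a set \<Rightarrow> ('a \<times> 'a) set \<Rightarrow> 'a list \<Rightarrow> bool" where
  "dpath V E p \<longleftrightarrow> p \<noteq> [] \<and> distinct p \<and> set p \<subseteq> V \<and>
     (\<forall>i. Suc i < length p \<longrightarrow> (p ! i, p ! Suc i) \<in> E)"

definition ordered_partition :: "'a set list \<Rightarrow> 'a set \<Rightarrow> bool" where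
  "ordered_partition S W \<longleftrightarrow>
     (\<forall>i<length S. S ! i \<noteq> {}) \<and>
     (\<forall>i<length S. \<forall>j<length S. i \<noteq> j \<longrightarrow> S ! i \<inter> S ! j = {}) \<and>
     \<Union> (set S) = W"

definition is_solution ::
  "('b set \<times> ('b \<times> 'b) set) set \<Rightarrow> 'a set \<Rightarrow> ('a \<times> 'a) set \<Rightarrow> 'a set list \<Rightarrow> 'a set \<Rightarrow> int
     \<Rightarrow> 'a set \<Rightarrow> bool" where
  "is_solution \<H> V E S W k X \<longleftrightarrow>
     X \<subseteq> V \<and> int (card X) \<le> k \<and> X \<inter> W = {} \<and> H_deletion_set \<H> V E X \<and>
     (\<forall>i j p. i < j \<and> j < length S \<and> dpath V E p \<and> hd p \<in> S ! i \<and> last p \<in> S ! j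
        \<longrightarrow> set p \<inter> X \<noteq> {})"

definition out_nbrs :: "'a set \<Rightarrow> ('a \<times> 'a) set \<Rightarrow> 'a set \<Rightarrow> 'a set" where
  "out_nbrs V E Q = {v \<in> V - Q. \<exists>u\<in>Q. (u, v) \<in> E}"

definition separator :: "'a set \<Rightarrow> ('a \<times> 'a) set \<Rightarrow> 'a set \<Rightarrow> 'a set \<Rightarrow> 'a set \<Rightarrow> bool" where
  "separator V E A B C \<longleftrightarrow> C \<subseteq> V \<and> C \<inter> (A \<union> B) = {} \<and>
     \<not> (\<exists>p. dpath (V - C) (induced_arcs E (V - C)) p \<and> hd p \<in> A \<and> last p \<in> B)"

definition min_separator :: "'a set \<Rightarrow> ('a \<times> 'a) set \<Rightarrow> 'a set \<Rightarrow> 'a set \<Rightarrow> 'a set \<Rightarrow> bool" where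
  "min_separator V E A B C \<longleftrightarrow> separator V E A B C \<and>
     (\<forall>C'. separator V E A B C' \<longrightarrow> card C \<le> card C')"

definition reach_set :: "'a set \<Rightarrow> ('a \<times> 'a) set \<Rightarrow> 'a set \<Rightarrow> 'a set \<Rightarrow> 'a set" where
  "reach_set V E A Y = {v. \<exists>a\<in>A. reaches (V - Y) (induced_arcs E (V - Y)) a v}"

end

theory Submission
  imports Defs
begin

(* The new solution is X' = (X - Q) \<union> N^+(Q). As R = R_D(S_1, X) avoids N^+(Q), it stays
   inside Q; hence N^+(R) is an S_1-(W - S_1) separator contained in X \<inter> (Q \<union> N^+(Q)), and
   minimality of N^+(Q) gives |X'| \<le> |X|. A path between two parts of S meeting X inside Q
   has to leave Q, so it meets N^+(Q). A strong component of D - X' meeting Q cannot leave Q,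
   so it lies in the H-free digraph D[Q]; one avoiding Q avoids X, so it lies in a strong
   component of D - X. *)

lemma induced_arcs_induced_arcs [simp]:
  "induced_arcs (induced_arcs E A) B = induced_arcs E (A \<inter> B)"
  unfolding induced_arcs_def by blast

lemma reaches_induced_arcs_self [simp]: "reaches U (induced_arcs E U) = reaches U E"
  unfolding reaches_def by (simp add: fun_eq_iff)

lemma strong_component_induced_arcs_self [simp]:
  "strong_component U (induced_arcs E U) = strong_component U E"
  unfolding strong_component_def by (simp add: fun_eq_iff)

lemma reach_set_iff: "v \<in> reach_set V E A Y \<longleftrightarrow> (\<exists>a\<in>A. reaches (V - Y) E a v)"
  unfolding reach_set_def by simp

lemma reaches_refl: "u \<in> V \<Longrightarrow> reaches V E u u"
  unfolding reaches_def by simp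

lemma reaches_memD:
  assumes "reaches V E u v"
  shows "u \<in> V" "v \<in> V"
  using assms unfolding reaches_def by simp_all

lemma reaches_trans: "reaches V E u v \<Longrightarrow> reaches V E v w \<Longrightarrow> reaches V E u w"
  unfolding reaches_def by (meson rtrancl_trans)

lemma reaches_step:
  "reaches V E u v \<Longrightarrow> (v, w) \<in> E \<Longrightarrow> w \<in> V \<Longrightarrow> reaches V E u w"
  unfolding reaches_def induced_arcs_def by (blast intro: rtrancl_into_rtrancl)

lemma reaches_arc: "u \<in> V \<Longrightarrow> (u, v) \<in> E \<Longrightarrow> v \<in> V \<Longrightarrow> reaches V E u v"
  by (rule reaches_step[OF reaches_refl])

lemma reaches_induct [consumes 1, case_names refl step]:
  assumes "reaches V E u v"
    and "P u"
    and "\<And>y z. reaches V E u y \<Longrightarrow> (y, z) \<in> E \<Longrightarrow> z \<in> V \<Longrightarrow> P y \<Longrightarrow> P z"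
  shows "P v"
proof -
  have "u \<in> V" and walk: "(u, v) \<in> (induced_arcs E V)\<^sup>*"
    using assms(1) unfolding reaches_def by simp_all
  from walk show ?thesis
  proof (induction rule: rtrancl_induct)
    case base
    show ?case by (rule assms(2))
  next
    case (step y z)
    then have "reaches V E u y" and "(y, z) \<in> E" and "z \<in> V"
      using \<open>u \<in> V\<close> unfolding reaches_def induced_arcs_def by auto
    then show ?case using step.IH assms(3) by blast
  qed
qed

lemma reaches_mono:
  assumes "reaches U E u v" "U \<subseteq> U'"
  shows "reaches U' E u v"
  using assms(1)
proof (induction rule: reaches_induct)
  case refl
  show ?case using reaches_memD(1)[OF assms(1)] assms(2) by (simp add: reaches_refl subsetD)
next
  case (step y z)
  then show ?case using assms(2) reaches_step[of U' E u y z] by blast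
qed

lemma reaches_leaves_set:
  assumes "reaches U E u v" "u \<in> Q" "v \<notin> Q" "U \<subseteq> V"
  shows "\<exists>z \<in> out_nbrs V E Q \<inter> U. reaches U E u z"
  using assms(1,3)
proof (induction rule: reaches_induct)
  case refl
  then show ?case using assms(2) by simp
next
  case (step y z)
  show ?case
  proof (cases "y \<in> Q")
    case True
    have "z \<in> out_nbrs V E Q"
      using True step.hyps(2,3) step.prems assms(4) unfolding out_nbrs_def by blast
    moreover have "reaches U E u z" using step.hyps(1-3) by (rule reaches_step)
    ultimately show ?thesis using step.hyps(3) by blast
  next
    case False
    then show ?thesis using step.IH by blast
  qed
qed

lemma list_leaves_set:
  assumes "x \<in> set xs" "x \<in> Q" "last xs \<notin> Q"
  shows "\<exists>i. Suc i < length xs \<and> xs ! i \<in> Q \<and> xs ! Suc i \<notin> Q"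
proof -
  define I where "I = {i. i < length xs \<and> xs ! i \<in> Q}"
  have "I \<noteq> {}" using assms(1,2) unfolding I_def by (auto simp: in_set_conv_nth)
  moreover have "finite I" unfolding I_def by simp
  ultimately have m: "Max I \<in> I" and maximal: "\<And>i. i \<in> I \<Longrightarrow> i \<le> Max I" by simp_all
  have "xs \<noteq> []" using assms(1) by auto
  then have "Max I \<noteq> length xs - 1" using m assms(3) unfolding I_def by (auto simp: last_conv_nth)
  moreover have "Max I < length xs" using m unfolding I_def by simp
  ultimately have "Suc (Max I) < length xs" by linarith
  moreover have "Suc (Max I) \<notin> I" using maximal by fastforce
  ultimately show ?thesis using m unfolding I_def by blast
qed

lemma dpath_mono: "dpath U F p \<Longrightarrow> U \<subseteq> V \<Longrightarrow> F \<subseteq> E \<Longrightarrow> dpath V E p"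
  unfolding dpath_def by blast

lemma dpath_leaves_set:
  assumes "dpath V E p" "x \<in> set p" "x \<in> Q" "last p \<notin> Q"
  shows "set p \<inter> out_nbrs V E Q \<noteq> {}"
proof -
  obtain i where i: "Suc i < length p" "p ! i \<in> Q" "p ! Suc i \<notin> Q"
    using list_leaves_set[OF assms(2-4)] by blast
  then have "p ! Suc i \<in> set p" and "(p ! i, p ! Suc i) \<in> E"
    using assms(1) unfolding dpath_def by auto
  then have "p ! Suc i \<in> set p \<inter> out_nbrs V E Q"
    using i assms(1) unfolding dpath_def out_nbrs_def by auto
  then show ?thesis by blast
qed

lemma strong_componentD:
  assumes "strong_component U E C"
  shows "C \<noteq> {}" "C \<subseteq> U" "\<And>u v. u \<in> C \<Longrightarrow> v \<in> C \<Longrightarrow> reaches U E u v"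
    "\<And>w u. w \<in> U \<Longrightarrow> u \<in> C \<Longrightarrow> reaches U E u w \<Longrightarrow> reaches U E w u \<Longrightarrow> w \<in> C"
  using assms unfolding strong_component_def by (simp_all, blast+)

lemma strong_component_walk_closed:
  assumes C: "strong_component U E C" and "u \<in> C" "v \<in> C"
    and "reaches U E u x" "reaches U E x v"
  shows "x \<in> C"
proof (rule strong_componentD(4)[OF C _ \<open>u \<in> C\<close> \<open>reaches U E u x\<close>])
  show "x \<in> U" using assms(4) by (rule reaches_memD)
  show "reaches U E x u"
    using assms(5) strong_componentD(3)[OF C \<open>v \<in> C\<close> \<open>u \<in> C\<close>] by (rule reaches_trans)
qed

lemma strong_component_reaches_within:
  assumes C: "strong_component U E C" and u: "u \<in> C" and v: "v \<in> C"
  shows "reaches C E u v"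
proof -
  have uv: "reaches U E u v" using strong_componentD(3)[OF C u v] .
  have "reaches U E x v \<longrightarrow> reaches C E u x" if "reaches U E u x" for x
    using that
  proof (induction rule: reaches_induct)
    case refl
    show ?case using u by (simp add: reaches_refl)
  next
    case (step y z)
    show ?case
    proof
      assume zv: "reaches U E z v"
      have "y \<in> U" using step.hyps(1) by (rule reaches_memD)
      then have "reaches U E y v" using step.hyps(2,3) zv by (blast intro: reaches_arc reaches_trans)
      then have uy: "reaches C E u y" using step.IH by simp
      have "z \<in> C"
        using strong_component_walk_closed[OF C u v reaches_step[OF step.hyps] zv] .
      with uy step.hyps(2) show "reaches C E u z" by (rule reaches_step)
    qed
  qed
  then show ?thesis using uv reaches_refl[OF reaches_memD(2)[OF uv]] by blast
qed

lemma strong_component_extends: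
  assumes C: "strong_component U E C" and "C \<subseteq> U'"
  obtains C' where "strong_component U' E C'" "C \<subseteq> C'"
proof -
  obtain c where c: "c \<in> C" using strong_componentD(1)[OF C] by blast
  let ?reach = "reaches U' E"
  define C' where "C' = {w \<in> U'. ?reach c w \<and> ?reach w c}"
  have "?reach x y" if "x \<in> C" "y \<in> C" for x y
    using strong_component_reaches_within[OF C that] assms(2) by (rule reaches_mono)
  then have "C \<subseteq> C'" using c assms(2) unfolding C'_def by blast
  moreover have "strong_component U' E C'"
    unfolding strong_component_def
  proof (intro conjI ballI impI)
    show "C' \<noteq> {}" using \<open>C \<subseteq> C'\<close> c by blast
    show "C' \<subseteq> U'" unfolding C'_def by blast
  next
    fix x y assume "x \<in> C'" "y \<in> C'"
    then have "?reach x c" "?reach c y" unfolding C'_def by simp_all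
    then show "?reach x y" by (rule reaches_trans)
  next
    fix w assume w: "w \<in> U'" "\<exists>x\<in>C'. ?reach x w \<and> ?reach w x"
    then obtain x where cx: "?reach c x" and xc: "?reach x c" and "?reach x w" "?reach w x"
      unfolding C'_def by blast
    then have "?reach c w" "?reach w c"
      using reaches_trans[OF cx] reaches_trans[OF _ xc] by simp_all
    then show "w \<in> C'" using w(1) unfolding C'_def by simp
  qed
  ultimately show ?thesis using that by blast
qed

lemma contains_copy_mono:
  assumes "contains_copy C (induced_arcs E C) VH EH" "C \<subseteq> C'"
  shows "contains_copy C' (induced_arcs E C') VH EH"
proof -
  obtain f where "inj_on f VH" "f ` VH \<subseteq> C" "\<forall>(u, v)\<in>EH. (f u, f v) \<in> induced_arcs E C"
    using assms(1) unfolding contains_copy_def by blast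
  moreover have "induced_arcs E C \<subseteq> induced_arcs E C'"
    using assms(2) unfolding induced_arcs_def by blast
  ultimately show ?thesis using assms(2) unfolding contains_copy_def by fast
qed

lemma subset_reach_set:
  assumes "A \<subseteq> V - Y"
  shows "A \<subseteq> reach_set V E A Y"
proof
  fix a assume "a \<in> A"
  then have "reaches (V - Y) E a a" using assms by (simp add: reaches_refl subset_iff)
  then show "a \<in> reach_set V E A Y" using \<open>a \<in> A\<close> unfolding reach_set_iff by blast
qed

lemma out_nbrs_reach_set_subset: "out_nbrs V E (reach_set V E A Y) \<subseteq> Y"
proof
  fix v assume "v \<in> out_nbrs V E (reach_set V E A Y)"
  then have v: "v \<in> V" "v \<notin> reach_set V E A Y" and "\<exists>u \<in> reach_set V E A Y. (u, v) \<in> E"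
    unfolding out_nbrs_def by simp_all
  then obtain u where u: "u \<in> reach_set V E A Y" and uv: "(u, v) \<in> E" by blast
  then obtain a where a: "a \<in> A" and au: "reaches (V - Y) E a u"
    unfolding reach_set_iff by blast
  show "v \<in> Y"
  proof (rule ccontr)
    assume "v \<notin> Y"
    then have "reaches (V - Y) E a v" using reaches_step[OF au uv] v(1) by simp
    then show False using a v(2) unfolding reach_set_iff by blast
  qed
qed

lemma reach_set_subset_if_disjoint_out_nbrs:
  assumes "A \<subseteq> Q" "reach_set V E A Y \<inter> out_nbrs V E Q = {}"
  shows "reach_set V E A Y \<subseteq> Q"
proof
  fix v assume "v \<in> reach_set V E A Y"
  then obtain a where a: "a \<in> A" and av: "reaches (V - Y) E a v"
    unfolding reach_set_iff by blast
  show "v \<in> Q"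
  proof (rule ccontr)
    assume "v \<notin> Q"
    moreover have "a \<in> Q" using a assms(1) by blast
    ultimately obtain z where "z \<in> out_nbrs V E Q" "reaches (V - Y) E a z"
      using reaches_leaves_set[OF av _ _ Diff_subset] by blast
    moreover have "z \<in> reach_set V E A Y" using a \<open>reaches (V - Y) E a z\<close> unfolding reach_set_iff by blast
    ultimately show False using assms(2) by blast
  qed
qed

lemma out_nbrs_subset_Un: "R \<subseteq> Q \<Longrightarrow> out_nbrs V E R \<subseteq> Q \<union> out_nbrs V E Q"
  unfolding out_nbrs_def by blast

lemma out_nbrs_separator:
  assumes "A \<subseteq> R" "B \<inter> R = {}" "out_nbrs V E R \<inter> B = {}"
  shows "separator V E A B (out_nbrs V E R)"
  unfolding separator_def
proof (intro conjI notI)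
  let ?N = "out_nbrs V E R"
  show "?N \<subseteq> V" unfolding out_nbrs_def by blast
  show "?N \<inter> (A \<union> B) = {}" using assms(1,3) unfolding out_nbrs_def by blast
  assume "\<exists>p. dpath (V - ?N) (induced_arcs E (V - ?N)) p \<and> hd p \<in> A \<and> last p \<in> B"
  then obtain p where p: "dpath (V - ?N) (induced_arcs E (V - ?N)) p" "hd p \<in> A" "last p \<in> B"
    by blast
  have "dpath V E p" using dpath_mono[OF p(1) Diff_subset] by (simp add: induced_arcs_def)
  moreover have "hd p \<in> set p" using p(1) unfolding dpath_def by simp
  ultimately have "set p \<inter> ?N \<noteq> {}"
    using dpath_leaves_set[of V E p "hd p" R] p(2,3) assms(1,2) by blast
  moreover have "set p \<subseteq> V - ?N" using p(1) unfolding dpath_def by blast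
  ultimately show False by blast
qed

lemma card_out_nbrs_le_card_Int:
  assumes "finite X" "A \<subseteq> Q" "A \<subseteq> V - X" "Q \<inter> B = {}" "X \<inter> B = {}"
    and min: "min_separator V E A B (out_nbrs V E Q)"
    and disj: "reach_set V E A X \<inter> out_nbrs V E Q = {}"
  shows "card (out_nbrs V E Q) \<le> card (X \<inter> (Q \<union> out_nbrs V E Q))"
proof -
  let ?R = "reach_set V E A X"
  have "?R \<subseteq> Q" using assms(2) disj by (rule reach_set_subset_if_disjoint_out_nbrs)
  have "out_nbrs V E ?R \<subseteq> X" by (rule out_nbrs_reach_set_subset)
  have "separator V E A B (out_nbrs V E ?R)"
  proof (rule out_nbrs_separator)
    show "A \<subseteq> ?R" using assms(3) by (rule subset_reach_set)
    show "B \<inter> ?R = {}" using \<open>?R \<subseteq> Q\<close> assms(4) by blast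
    show "out_nbrs V E ?R \<inter> B = {}" using \<open>out_nbrs V E ?R \<subseteq> X\<close> assms(5) by blast
  qed
  then have "card (out_nbrs V E Q) \<le> card (out_nbrs V E ?R)"
    using min unfolding min_separator_def by blast
  also have "\<dots> \<le> card (X \<inter> (Q \<union> out_nbrs V E Q))"
    using \<open>out_nbrs V E ?R \<subseteq> X\<close> out_nbrs_subset_Un[OF \<open>?R \<subseteq> Q\<close>] assms(1)
    by (intro card_mono) auto
  finally show ?thesis .
qed

lemma card_Diff_Un_le:
  assumes "finite X" "finite P" "card P \<le> card (X \<inter> (Q \<union> P))"
  shows "card ((X - Q) \<union> P) \<le> card X"
proof -
  have "card ((X - Q) \<union> P) = card ((X - (Q \<union> P)) \<union> P)"
    by (rule arg_cong[where f = card]) blast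
  also have "\<dots> = card (X - (Q \<union> P)) + card P"
    using assms(1,2) by (intro card_Un_disjoint) auto
  also have "\<dots> \<le> card (X - (Q \<union> P)) + card (X \<inter> (Q \<union> P))" using assms(3) by simp
  also have "\<dots> = card X" using card_Int_Diff[OF assms(1), of "Q \<union> P"] by simp
  finally show ?thesis .
qed

lemma H_deletion_set_Diff_Un_out_nbrs:
  assumes X: "H_deletion_set \<H> V E X"
    and Q: "\<forall>(VH, EH)\<in>\<H>. \<not> contains_copy Q (induced_arcs E Q) VH EH"
  shows "H_deletion_set \<H> V E ((X - Q) \<union> out_nbrs V E Q)"
  unfolding H_deletion_set_def
proof (intro allI impI)
  let ?X' = "(X - Q) \<union> out_nbrs V E Q"
  fix C assume "strong_component (V - ?X') (induced_arcs E (V - ?X')) C"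
  then have C: "strong_component (V - ?X') E C" by simp
  show "\<forall>(VH, EH)\<in>\<H>. \<not> contains_copy C (induced_arcs E C) VH EH"
  proof (cases "C \<inter> Q = {}")
    case True
    then have "C \<subseteq> V - X" using strong_componentD(2)[OF C] by blast
    then obtain C' where C': "strong_component (V - X) E C'" "C \<subseteq> C'"
      using strong_component_extends[OF C] by blast
    have "\<forall>(VH, EH)\<in>\<H>. \<not> contains_copy C' (induced_arcs E C') VH EH"
      using X C'(1) unfolding H_deletion_set_def by simp
    then show ?thesis using contains_copy_mono[OF _ C'(2)] by fast
  next
    case False
    then obtain c where c: "c \<in> C" "c \<in> Q" by blast
    have "C \<subseteq> Q"
    proof
      fix v assume v: "v \<in> C"
      show "v \<in> Q"
      proof (rule ccontr)
        assume "v \<notin> Q"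
        moreover have "reaches (V - ?X') E c v" using strong_componentD(3)[OF C c(1) v] .
        ultimately obtain z where "z \<in> out_nbrs V E Q \<inter> (V - ?X')"
          using reaches_leaves_set[OF _ c(2) _ Diff_subset] by blast
        then show False by blast
      qed
    qed
    then show ?thesis using Q contains_copy_mono[OF _ \<open>C \<subseteq> Q\<close>] by fast
  qed
qed

lemma dpath_meets_Diff_Un_out_nbrs:
  assumes "dpath V E p" "set p \<inter> X \<noteq> {}" "last p \<notin> Q"
  shows "set p \<inter> ((X - Q) \<union> out_nbrs V E Q) \<noteq> {}"
proof -
  obtain x where x: "x \<in> set p" "x \<in> X" using assms(2) by blast
  show ?thesis
  proof (cases "x \<in> Q")
    case True
    then show ?thesis using dpath_leaves_set[OF assms(1) x(1) True assms(3)] by blast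
  qed (use x in blast)
qed

lemma ordered_partition_hd_subset: "ordered_partition S W \<Longrightarrow> S \<noteq> [] \<Longrightarrow> hd S \<subseteq> W"
  unfolding ordered_partition_def by (auto simp: hd_in_set)

lemma ordered_partition_nth_subset:
  assumes "ordered_partition S W" "0 < j" "j < length S"
  shows "S ! j \<subseteq> W - hd S"
proof -
  have "hd S = S ! 0" using assms(3) by (cases S) auto
  moreover have "S ! 0 \<inter> S ! j = {}"
    using assms unfolding ordered_partition_def by (metis less_trans neq0_conv)
  moreover have "S ! j \<in> set S" using assms(3) by simp
  ultimately show ?thesis using assms(1) unfolding ordered_partition_def by blast
qed

theorem lemma11:
  fixes \<H> :: "('b set \<times> ('b \<times> 'b) set) set"
    and V :: "'a set" and E :: "('a \<times> 'a) set"
    and k :: int and W Q X :: "'a set" and S :: "'a set list"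
  assumes fam: "finite \<H>" "\<forall>(VH, EH)\<in>\<H>. digraph VH EH \<and> rooted VH EH"
    and D: "digraph V E"
    and W: "W \<subseteq> V" "H_deletion_set \<H> V E W" "int (card W) \<le> k + 1"
    and S: "ordered_partition S W" "S \<noteq> []"
    and Q: "hd S \<subseteq> Q" "Q \<subseteq> V - (W - hd S)"
      "\<forall>(VH, EH)\<in>\<H>. \<not> contains_copy Q (induced_arcs E Q) VH EH"
      "min_separator V E (hd S) (W - hd S) (out_nbrs V E Q)"
    and X: "is_solution \<H> V E S W k X"
      "reach_set V E (hd S) X \<inter> out_nbrs V E Q = {}"
  shows "\<exists>X'. is_solution \<H> V E S W k X' \<and> out_nbrs V E Q \<subseteq> X'"
proof -
  define P where "P = out_nbrs V E Q"
  have XV: "X \<subseteq> V" and cardX: "int (card X) \<le> k" and XW: "X \<inter> W = {}"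
    and Xdel: "H_deletion_set \<H> V E X"
    and Xsep: "\<And>i j p. i < j \<Longrightarrow> j < length S \<Longrightarrow> dpath V E p \<Longrightarrow> hd p \<in> S ! i \<Longrightarrow>
        last p \<in> S ! j \<Longrightarrow> set p \<inter> X \<noteq> {}"
    using X(1) unfolding is_solution_def by blast+
  have "finite V" using D unfolding digraph_def by simp
  then have fin: "finite X" "finite P" using XV finite_subset unfolding P_def out_nbrs_def by auto
  have hdS: "hd S \<subseteq> W" using S by (rule ordered_partition_hd_subset)
  have PW: "P \<inter> W = {}" using Q(4) hdS unfolding P_def min_separator_def separator_def by blast
  have "hd S \<subseteq> V - X" "Q \<inter> (W - hd S) = {}" "X \<inter> (W - hd S) = {}"
    using hdS W(1) XW Q(2) by blast+
  then have "card P \<le> card (X \<inter> (Q \<union> P))"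
    unfolding P_def using card_out_nbrs_le_card_Int[OF fin(1) Q(1) _ _ _ Q(4) X(2)] by blast
  then have card_X': "int (card ((X - Q) \<union> P)) \<le> k" using card_Diff_Un_le[OF fin] cardX by fastforce
  have sep_X': "set p \<inter> ((X - Q) \<union> P) \<noteq> {}"
    if "i < j" "j < length S" "dpath V E p" "hd p \<in> S ! i" "last p \<in> S ! j" for i j p
  proof -
    have "last p \<notin> Q" using ordered_partition_nth_subset[OF S(1), of j] that(1,2,5) Q(2) by auto
    then show ?thesis using dpath_meets_Diff_Un_out_nbrs[OF that(3) Xsep[OF that]] unfolding P_def by blast
  qed
  have "H_deletion_set \<H> V E ((X - Q) \<union> P)"
    unfolding P_def using Xdel Q(3) by (rule H_deletion_set_Diff_Un_out_nbrs)
  moreover have "(X - Q) \<union> P \<subseteq> V" "((X - Q) \<union> P) \<inter> W = {}"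
    using XV XW PW unfolding P_def out_nbrs_def by auto
  ultimately have "is_solution \<H> V E S W k ((X - Q) \<union> P)"
    unfolding is_solution_def using card_X' sep_X' by blast
  then show ?thesis unfolding P_def by blast
qed

end
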